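(* Let $V$ be a fixed real-valued score function, $X_1,\dots,X_{n+1}\in\mathbb R^p$, calibration scores $V_1\le V_2\le\dots\le V_n$ (indexed in increasing order), and $H:\mathbb R^p\times\mathbb R^p\to[0,1]$ a localizer with $H(x,x)=1$; put $H_{ij}=H(X_i,X_j)$ and $p^H_{ij}=H_{ij}/\sum_{k=1}^{n+1}H_{ik}$. For $v\in\mathbb R\cup\{\pm\infty\}$ let $\hat{\mathcal F}_i(v)=\sum_{j=1}^{n}p^H_{ij}\delta_{V_j}+p^H_{i,n+1}\delta_v$, and $\hat{\mathcal F}=\sum_{j=1}^np^H_{n+1,j}\delta_{V_j}+p^H_{n+1,n+1}\delta_{+\infty}$. Fix $\alpha\in(0,1)$, let $\Gamma=\{\sum_{k\in I}p^H_{ik}: i\in\{1,\dots,n+1\},\ I\subseteq\{1,\dots,n+1\}\}$, and for each $v$ let $\tilde\alpha(v)$ be the smallest $\tilde\alpha\in\Gamma$ with $\frac{1}{n+1}\sum_{i=1}^{n+1}\mathbb 1\{V_i\le Q(\tilde\alpha;\hat{\mathcal F}_i(v))\}\ge\alpha$ (with $V_{n+1}=v$ in this sum); set $C_V(X_{n+1})=\{v: v\le Q(\tilde\alpha(v);\hat{\mathcal F})\}$. Let $\overline V_0=-\infty$, $\overline V_i=V_i$ for $1\le i\le n$, $\overline V_{n+1}=+\infty$. For $i=1,\dots,n+1$ let $\ell(i)=\max\{i'\in\{1,\dots,n\}: V_{i'}<\overline V_i\}$ (with $\max\emptyset=0$), $\theta_i=\sum_{j=1}^{\ell(i)}p^H_{ij}$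 and $\tilde\theta_i=\sum_{j=1}^{\ell(i)}p^H_{n+1,j}$ (both $0$ if $\ell(i)=0$). For $k=1,\dots,n+1$ let $$S(k)=\frac{1}{n+1}\sum_{i=1}^{n}\mathbb 1\{V_i\le Q(\tilde\theta_k;\hat{\mathcal F}_i(\overline V_{\ell(k)}))\}.$$ Then: 1. If $k^*$ is the largest index $k\in\{1,\dots,n+1\}$ with $S(k)<\alpha$, then $\{v: v\le\overline V_{k^*}\}$ is the closure of $C_V(X_{n+1})$. 2. Partition the calibration indices $\{1,\dots,n\}$ into $A_1=\{i:p^H_{i,n+1}+\theta_i<\tilde\theta_i\}$, $A_2=\{i:\theta_i\ge\tilde\theta_i\}$, $A_3=\{i: p^H_{i,n+1}+\theta_i\ge\tilde\theta_i,\ \theta_i<\tilde\theta_i\}$. Then for every $k=1,\dots,n+1$, $$S(k)=\frac{1}{n+1}\Big(\sum_{i\in A_1}\mathbb 1\{\theta_i+p^H_{i,n+1}<\tilde\theta_k\}+\sum_{i\in A_2}\mathbb 1\{\theta_i<\tilde\theta_k\}+\sum_{i\in A_3}\mathbb 1\{\ell(i)<\ell(k)\}\Big).$$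
   Context: For a distribution $\mathcal F$ on $\mathbb R\cup\{\pm\infty\}$, $Q(\alpha;\mathcal F)=\inf\{t:\mathbb P_{T\sim\mathcal F}(T\le t)\ge\alpha\}$; $\delta_v$ is the point mass at $v$. *)

theory Defs
  imports "HOL-Analysis.Analysis"
begin

definition pH :: "nat \<Rightarrow> (real^'p \<Rightarrow> real^'p \<Rightarrow> real) \<Rightarrow> (nat \<Rightarrow> real^'p) \<Rightarrow> nat \<Rightarrow> nat \<Rightarrow> real" where
  "pH n H X i j = H (X i) (X j) / (\<Sum>k=1..n+1. H (X i) (X k))"

text \<open>Distributions on the extended reals are represented by their CDF
  t \<mapsto> P(T \<le> t); the quantile Q(alpha; F) = inf {t. P(T \<le> t) \<ge> alpha}.\<close>
definition quantile :: "real \<Rightarrow> (ereal \<Rightarrow> real) \<Rightarrow> ereal" where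
  "quantile a F = Inf {t. F t \<ge> a}"

definition delta_cdf :: "ereal \<Rightarrow> ereal \<Rightarrow> real" where
  "delta_cdf v t = (if v \<le> t then 1 else 0)"

definition Fi :: "nat \<Rightarrow> (nat \<Rightarrow> real) \<Rightarrow> (nat \<Rightarrow> nat \<Rightarrow> real) \<Rightarrow> nat \<Rightarrow> ereal \<Rightarrow> ereal \<Rightarrow> real" where
  "Fi n V p i v = (\<lambda>t. (\<Sum>j=1..n. p i j * delta_cdf (ereal (V j)) t) + p i (n+1) * delta_cdf v t)"

definition Fhat :: "nat \<Rightarrow> (nat \<Rightarrow> real) \<Rightarrow> (nat \<Rightarrow> nat \<Rightarrow> real) \<Rightarrow> ereal \<Rightarrow> real" where
  "Fhat n V p = (\<lambda>t. (\<Sum>j=1..n. p (n+1) j * delta_cdf (ereal (V j)) t) + p (n+1) (n+1) * delta_cdf \<infinity> t)"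

definition Gamma :: "nat \<Rightarrow> (nat \<Rightarrow> nat \<Rightarrow> real) \<Rightarrow> real set" where
  "Gamma n p = {(\<Sum>k\<in>I. p i k) | i I. i \<in> {1..n+1} \<and> I \<subseteq> {1..n+1}}"

definition cov_frac :: "nat \<Rightarrow> (nat \<Rightarrow> real) \<Rightarrow> (nat \<Rightarrow> nat \<Rightarrow> real) \<Rightarrow> real \<Rightarrow> ereal \<Rightarrow> real" where
  "cov_frac n V p a v = (1 / real (n+1)) *
     ((\<Sum>i=1..n. if ereal (V i) \<le> quantile a (Fi n V p i v) then 1 else 0)
      + (if v \<le> quantile a (Fi n V p (n+1) v) then 1 else 0))"

definition alpha_tilde :: "nat \<Rightarrow> (nat \<Rightarrow> real) \<Rightarrow> (nat \<Rightarrow> nat \<Rightarrow> real) \<Rightarrow> real \<Rightarrow> ereal \<Rightarrow> real" where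
  "alpha_tilde n V p \<alpha> v = Min {a \<in> Gamma n p. cov_frac n V p a v \<ge> \<alpha>}"

definition conf_set :: "nat \<Rightarrow> (nat \<Rightarrow> real) \<Rightarrow> (nat \<Rightarrow> nat \<Rightarrow> real) \<Rightarrow> real \<Rightarrow> real set" where
  "conf_set n V p \<alpha> = {v. ereal v \<le> quantile (alpha_tilde n V p \<alpha> (ereal v)) (Fhat n V p)}"

definition Vbar :: "nat \<Rightarrow> (nat \<Rightarrow> real) \<Rightarrow> nat \<Rightarrow> ereal" where
  "Vbar n V i = (if i = 0 then -\<infinity> else if i \<le> n then ereal (V i) else \<infinity>)"

definition ell :: "nat \<Rightarrow> (nat \<Rightarrow> real) \<Rightarrow> nat \<Rightarrow> nat" where
  "ell n V i = Max (insert 0 {i' \<in> {1..n}. ereal (V i') < Vbar n V i})"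

definition theta :: "nat \<Rightarrow> (nat \<Rightarrow> real) \<Rightarrow> (nat \<Rightarrow> nat \<Rightarrow> real) \<Rightarrow> nat \<Rightarrow> real" where
  "theta n V p i = (\<Sum>j=1..ell n V i. p i j)"

definition theta_t :: "nat \<Rightarrow> (nat \<Rightarrow> real) \<Rightarrow> (nat \<Rightarrow> nat \<Rightarrow> real) \<Rightarrow> nat \<Rightarrow> real" where
  "theta_t n V p i = (\<Sum>j=1..ell n V i. p (n+1) j)"

definition Sfun :: "nat \<Rightarrow> (nat \<Rightarrow> real) \<Rightarrow> (nat \<Rightarrow> nat \<Rightarrow> real) \<Rightarrow> nat \<Rightarrow> real" where
  "Sfun n V p k = (1 / real (n+1)) *
     (\<Sum>i=1..n. if ereal (V i) \<le> quantile (theta_t n V p k) (Fi n V p i (Vbar n V (ell n V k))) then 1 else 0)"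

definition A1 :: "nat \<Rightarrow> (nat \<Rightarrow> real) \<Rightarrow> (nat \<Rightarrow> nat \<Rightarrow> real) \<Rightarrow> nat set" where
  "A1 n V p = {i \<in> {1..n}. p i (n+1) + theta n V p i < theta_t n V p i}"

definition A2 :: "nat \<Rightarrow> (nat \<Rightarrow> real) \<Rightarrow> (nat \<Rightarrow> nat \<Rightarrow> real) \<Rightarrow> nat set" where
  "A2 n V p = {i \<in> {1..n}. theta n V p i \<ge> theta_t n V p i}"

definition A3 :: "nat \<Rightarrow> (nat \<Rightarrow> real) \<Rightarrow> (nat \<Rightarrow> nat \<Rightarrow> real) \<Rightarrow> nat set" where
  "A3 n V p = {i \<in> {1..n}. p i (n+1) + theta n V p i \<ge> theta_t n V p i \<and> theta n V p i < theta_t n V p i}"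

end

theory Submission
  imports Defs
begin

text \<open>All distributions involved are finite mixtures of point masses, and for such an \<open>F\<close>,
  \<open>x \<le> Q(a; F)\<close> holds iff the mass \<open>F\<close> puts strictly below \<open>x\<close> is less than \<open>a\<close>. So the
  \<open>i\<close>-th calibration indicator becomes \<open>\<theta>\<^sub>i + [v < V\<^sub>i] p\<^sub>i\<^sub>,\<^sub>n\<^sub>+\<^sub>1 < a\<close>, while the test
  indicator and \<open>v \<le> Q(a; F)\<close> for the test distribution both become \<open>\<tau>(r(v)) < a\<close>, where
  \<open>r(v)\<close> (\<open>rank_below\<close>) counts the calibration scores below \<open>v\<close> and \<open>\<tau>(L)\<close> (\<open>test_mass\<close>)
  is the test-row mass of the first \<open>L\<close> of them. Since \<open>\<tau>(r(v)) \<in> \<Gamma>\<close> and coverage is monotone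
  in the level, \<open>v\<close> lies in the conformal set iff the coverage at level \<open>\<tau>(r(v))\<close> is below
  \<open>\<alpha>\<close>. For \<open>v\<close> off the finitely many scores this coverage depends only on \<open>r(v)\<close>
  (\<open>S_rank\<close>), monotonically, and equals \<open>S(k)\<close> at rank \<open>\<ell>(k)\<close>; part 1 follows, the closure
  absorbing the scores themselves. Part 2 is a case split along \<open>A\<^sub>1, A\<^sub>2, A\<^sub>3\<close> that uses
  only the monotonicity of \<open>\<tau>\<close>.\<close>

lemma le_quantile_iff: "x \<le> quantile a F \<longleftrightarrow> (\<forall>t<x. F t < a)"
  unfolding quantile_def by (auto simp: le_Inf_iff not_le) (meson not_le)

lemma quantile_mono: "a \<le> a' \<Longrightarrow> quantile a F \<le> quantile a' F"
  unfolding quantile_def by (rule Inf_superset_mono) auto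

lemma sum_delta_cdf:
  "finite J \<Longrightarrow> (\<Sum>j\<in>J. w j * delta_cdf (y j) t) = (\<Sum>j\<in>{j\<in>J. y j \<le> t}. w j)"
  by (simp add: sum.inter_filter delta_cdf_def if_distrib cong: if_cong)

lemma le_quantile_point_masses_iff:
  fixes y :: "'j \<Rightarrow> ereal"
  assumes J: "finite J" and w: "\<And>j. j \<in> J \<Longrightarrow> 0 \<le> w j" and c: "0 \<le> c"
    and x: "x \<noteq> -\<infinity>"
  shows "x \<le> quantile a (\<lambda>t. (\<Sum>j\<in>J. w j * delta_cdf (y j) t) + c * delta_cdf z t)
     \<longleftrightarrow> (\<Sum>j\<in>{j\<in>J. y j < x}. w j) + (if z < x then c else 0) < a"
    (is "_ \<longleftrightarrow> ?mass < a")
proof -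
  let ?F = "\<lambda>t. (\<Sum>j\<in>J. w j * delta_cdf (y j) t) + c * delta_cdf z t"
  have F_below: "?F t \<le> ?mass" if "t < x" for t
  proof -
    have "(\<Sum>j\<in>{j\<in>J. y j \<le> t}. w j) \<le> (\<Sum>j\<in>{j\<in>J. y j < x}. w j)"
      using J w that by (intro sum_mono2) auto
    moreover have "c * delta_cdf z t \<le> (if z < x then c else 0)"
      using c that by (auto simp: delta_cdf_def)
    ultimately show ?thesis by (simp add: sum_delta_cdf[OF J])
  qed
  \<comment> \<open>the largest atom below \<open>x\<close> carries the whole mass below \<open>x\<close>\<close>
  define M where "M = insert (-\<infinity>) ((y ` J \<union> {z}) \<inter> {..<x})"
  define t0 where "t0 = Max M"
  have "finite M" using J by (simp add: M_def)
  then have t0_less: "t0 < x" and "\<And>u. u \<in> y ` J \<union> {z} \<Longrightarrow> u < x \<Longrightarrow> u \<le> t0"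
    using Max_in[of M] x by (auto simp: t0_def M_def ereal_MInfty_lessI)
  then have "u \<le> t0 \<longleftrightarrow> u < x" if "u \<in> y ` J \<union> {z}" for u
    using that by (meson le_less_trans)
  then have "{j\<in>J. y j \<le> t0} = {j\<in>J. y j < x}" and "z \<le> t0 \<longleftrightarrow> z < x"
    by auto
  then have "?F t0 = ?mass"
    unfolding sum_delta_cdf[OF J] by (simp add: delta_cdf_def)
  then show ?thesis
    unfolding le_quantile_iff using F_below t0_less by (metis le_less_trans)
qed

lemma closure_open_Diff_finite:
  fixes S :: "'a::{real_normed_vector, perfect_space} set"
  assumes "open S" "finite F"
  shows "closure (S - F) = closure S"
proof -
  have "closure (- F) = UNIV"
    using assms(2) by (simp add: closure_complement empty_interior_finite)
  then show ?thesis
    using closure_open_Int_superset[OF assms(1), of "- F"] by (simp add: Diff_eq)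
qed

lemma open_ereal_less: "open {x. ereal x < b}"
  by (cases b) (auto simp: lessThan_def[symmetric])

lemma closed_ereal_le: "closed {x. ereal x \<le> b}"
  by (cases b) (auto simp: atMost_def[symmetric])

lemma closure_ereal_less: "b \<noteq> -\<infinity> \<Longrightarrow> closure {x. ereal x < b} = {x. ereal x \<le> b}"
  by (cases b) (auto simp: lessThan_def[symmetric] atMost_def[symmetric])

locale localized_calibration =
  fixes n :: nat and V :: "nat \<Rightarrow> real" and p :: "nat \<Rightarrow> nat \<Rightarrow> real"
  assumes V_mono: "mono_on {1..n} V"
    and p_nonneg: "\<And>i j. 0 \<le> p i j"
    and p_diag_pos: "\<And>i. i \<in> {1..n+1} \<Longrightarrow> 0 < p i i"
    and p_row_sum: "\<And>i. i \<in> {1..n+1} \<Longrightarrow> (\<Sum>j=1..n+1. p i j) = 1"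
begin

definition rank_below :: "ereal \<Rightarrow> nat" where
  "rank_below x = Max (insert 0 {i\<in>{1..n}. ereal (V i) < x})"

lemma rank_below_le: "rank_below x \<le> n"
  unfolding rank_below_def by simp

lemma rank_below_mono: "x \<le> y \<Longrightarrow> rank_below x \<le> rank_below y"
  unfolding rank_below_def by (rule Max_mono) (auto intro: less_le_trans)

lemma rank_below_set: "{j\<in>{1..n}. ereal (V j) < x} = {1..rank_below x}"
proof (intro equalityI subsetI)
  fix j assume "j \<in> {j\<in>{1..n}. ereal (V j) < x}"
  then show "j \<in> {1..rank_below x}" unfolding rank_below_def by auto
next
  fix j assume j: "j \<in> {1..rank_below x}"
  then have r: "rank_below x \<in> {i\<in>{1..n}. ereal (V i) < x}"
    using Max_in[of "insert 0 {i\<in>{1..n}. ereal (V i) < x}"] unfolding rank_below_def by auto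
  with j have "ereal (V j) \<le> ereal (V (rank_below x))" by (auto intro: mono_onD[OF V_mono])
  also have "\<dots> < x" using r by simp
  finally show "j \<in> {j\<in>{1..n}. ereal (V j) < x}" using r j by simp
qed

lemma ell_eq_rank_below: "ell n V k = rank_below (Vbar n V k)"
  unfolding ell_def rank_below_def ..

lemma ell_le: "ell n V k \<le> n"
  by (simp add: ell_eq_rank_below rank_below_le)

lemma Vbar_ereal: "i \<in> {1..n} \<Longrightarrow> Vbar n V i = ereal (V i)"
  unfolding Vbar_def by auto

lemma ell_set: "i \<in> {1..n} \<Longrightarrow> {j\<in>{1..n}. V j < V i} = {1..ell n V i}"
  using rank_below_set[of "ereal (V i)"] by (simp add: ell_eq_rank_below Vbar_ereal)

lemma ell_less: assumes k: "k \<in> {1..n+1}" shows "ell n V k < k"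
proof (cases "ell n V k = 0")
  case False
  then have l: "ell n V k \<in> {j\<in>{1..n}. ereal (V j) < Vbar n V k}"
    unfolding ell_eq_rank_below rank_below_set by simp
  show ?thesis
  proof (rule ccontr)
    assume "\<not> ell n V k < k"
    with l k have "k \<le> n" and "V k \<le> V (ell n V k)" by (auto intro: mono_onD[OF V_mono])
    with l k show False by (simp add: Vbar_ereal)
  qed
qed (use k in simp)

lemma rank_below_le_ell: "i \<in> {1..n} \<Longrightarrow> v < V i \<Longrightarrow> rank_below (ereal v) \<le> ell n V i"
  by (simp add: ell_eq_rank_below Vbar_ereal rank_below_mono)

lemma less_if_rank_below_le_ell:
  assumes i: "i \<in> {1..n}" and "V i \<noteq> v" and "rank_below (ereal v) \<le> ell n V i"
  shows "v < V i"
proof (rule ccontr)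
  assume "\<not> v < V i"
  with assms have "i \<in> {1..rank_below (ereal v)}" unfolding rank_below_set[symmetric] by auto
  with assms ell_less[of i] show False by auto
qed

lemma Vbar_ell_less_iff:
  assumes i: "i \<in> {1..n}"
  shows "Vbar n V (ell n V k) < ereal (V i) \<longleftrightarrow> ell n V k \<le> ell n V i"
proof (cases "ell n V k = 0")
  case True then show ?thesis by (simp add: Vbar_def)
next
  case False
  then have l: "ell n V k \<in> {1..n}" using ell_le[of k] by simp
  then have "Vbar n V (ell n V k) < ereal (V i) \<longleftrightarrow> ell n V k \<in> {j\<in>{1..n}. V j < V i}"
    by (simp add: Vbar_ereal)
  also have "\<dots> \<longleftrightarrow> ell n V k \<le> ell n V i"
    unfolding ell_set[OF i] using l by simp
  finally show ?thesis .
qed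

definition test_mass :: "nat \<Rightarrow> real" where
  "test_mass L = (\<Sum>j=1..L. p (n+1) j)"

lemma theta_t_eq_test_mass: "theta_t n V p k = test_mass (ell n V k)"
  unfolding theta_t_def test_mass_def ..

lemma test_mass_mono: "L \<le> L' \<Longrightarrow> test_mass L \<le> test_mass L'"
  unfolding test_mass_def by (rule sum_mono2) (auto simp: p_nonneg)

lemma le_quantile_Fi_iff:
  assumes i: "i \<in> {1..n}"
  shows "ereal (V i) \<le> quantile a (Fi n V p i z) \<longleftrightarrow>
     theta n V p i + (if z < ereal (V i) then p i (n+1) else 0) < a"
proof -
  have "ereal (V i) \<le> quantile a (Fi n V p i z) \<longleftrightarrow>
      (\<Sum>j\<in>{j\<in>{1..n}. ereal (V j) < ereal (V i)}. p i j)
        + (if z < ereal (V i) then p i (n+1) else 0) < a"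
    unfolding Fi_def by (rule le_quantile_point_masses_iff) (auto simp: p_nonneg)
  then show ?thesis using ell_set[OF i] by (simp add: theta_def)
qed

lemma le_quantile_Fi_test_iff:
  "ereal v \<le> quantile a (Fi n V p (n+1) (ereal v)) \<longleftrightarrow> test_mass (rank_below (ereal v)) < a"
proof -
  have "ereal v \<le> quantile a (Fi n V p (n+1) (ereal v)) \<longleftrightarrow>
      (\<Sum>j\<in>{j\<in>{1..n}. ereal (V j) < ereal v}. p (n+1) j)
        + (if ereal v < ereal v then p (n+1) (n+1) else 0) < a"
    unfolding Fi_def by (rule le_quantile_point_masses_iff) (auto simp: p_nonneg)
  then show ?thesis using rank_below_set[of "ereal v"] by (simp add: test_mass_def)
qed

lemma le_quantile_Fhat_iff:
  "ereal v \<le> quantile a (Fhat n V p) \<longleftrightarrow> test_mass (rank_below (ereal v)) < a"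
proof -
  have "ereal v \<le> quantile a (Fhat n V p) \<longleftrightarrow>
      (\<Sum>j\<in>{j\<in>{1..n}. ereal (V j) < ereal v}. p (n+1) j)
        + (if \<infinity> < ereal v then p (n+1) (n+1) else 0) < a"
    unfolding Fhat_def by (rule le_quantile_point_masses_iff) (auto simp: p_nonneg)
  then show ?thesis using rank_below_set[of "ereal v"] by (simp add: test_mass_def)
qed

definition S_rank :: "nat \<Rightarrow> real" where
  "S_rank L = (1 / real (n+1)) *
     (\<Sum>i=1..n. if theta n V p i + (if L \<le> ell n V i then p i (n+1) else 0) < test_mass L
                then 1 else 0)"

lemma Sfun_eq_S_rank: "Sfun n V p k = S_rank (ell n V k)"
  unfolding Sfun_def S_rank_def theta_t_eq_test_mass
  by (intro arg_cong[where f = "\<lambda>x. _ * x"] sum.cong refl)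
     (simp add: le_quantile_Fi_iff Vbar_ell_less_iff)

lemma S_rank_mono: assumes "L \<le> L'" shows "S_rank L \<le> S_rank L'"
  unfolding S_rank_def
proof (intro mult_left_mono sum_mono)
  fix i
  have "(if L' \<le> ell n V i then p i (n+1) else 0) \<le> (if L \<le> ell n V i then p i (n+1) else 0)"
    using assms p_nonneg[of i "n+1"] by auto
  with test_mass_mono[OF assms]
  show "(if theta n V p i + (if L \<le> ell n V i then p i (n+1) else 0) < test_mass L then 1 else 0)
    \<le> (if theta n V p i + (if L' \<le> ell n V i then p i (n+1) else 0) < test_mass L'
        then (1::real) else 0)"
    by auto
qed simp

lemma cov_frac_at_test_mass:
  "cov_frac n V p (test_mass (rank_below (ereal v))) (ereal v) = (1 / real (n+1)) *
     (\<Sum>i=1..n. if theta n V p i + (if v < V i then p i (n+1) else 0)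
                  < test_mass (rank_below (ereal v)) then 1 else 0)"
  unfolding cov_frac_def le_quantile_Fi_test_iff
  by (simp add: le_quantile_Fi_iff)

lemma S_rank_le_cov_frac:
  "S_rank (rank_below (ereal v)) \<le> cov_frac n V p (test_mass (rank_below (ereal v))) (ereal v)"
  unfolding cov_frac_at_test_mass S_rank_def
proof (intro mult_left_mono sum_mono)
  fix i assume i: "i \<in> {1..n}"
  have "(if v < V i then p i (n+1) else 0)
      \<le> (if rank_below (ereal v) \<le> ell n V i then p i (n+1) else 0)"
    using rank_below_le_ell[OF i] p_nonneg[of i "n+1"] by auto
  then show "(if theta n V p i + (if rank_below (ereal v) \<le> ell n V i then p i (n+1) else 0)
        < test_mass (rank_below (ereal v)) then 1 else 0)
    \<le> (if theta n V p i + (if v < V i then p i (n+1) else 0) < test_mass (rank_below (ereal v))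
        then (1::real) else 0)"
    by auto
qed simp

lemma cov_frac_eq_S_rank:
  assumes v: "v \<notin> V ` {1..n}"
  shows "cov_frac n V p (test_mass (rank_below (ereal v))) (ereal v) = S_rank (rank_below (ereal v))"
  unfolding cov_frac_at_test_mass S_rank_def
proof (intro arg_cong[where f = "\<lambda>x. _ * x"] sum.cong refl)
  fix i assume i: "i \<in> {1..n}"
  moreover have "V i \<noteq> v" using i v by auto
  ultimately have "v < V i \<longleftrightarrow> rank_below (ereal v) \<le> ell n V i"
    using rank_below_le_ell less_if_rank_below_le_ell by blast
  then show "(if theta n V p i + (if v < V i then p i (n+1) else 0)
        < test_mass (rank_below (ereal v)) then 1 else 0)
    = (if theta n V p i + (if rank_below (ereal v) \<le> ell n V i then p i (n+1) else 0)
        < test_mass (rank_below (ereal v)) then (1::real) else 0)"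
    by simp
qed

lemma finite_Gamma: "finite (Gamma n p)"
proof -
  have "Gamma n p = (\<lambda>(i, I). \<Sum>k\<in>I. p i k) ` ({1..n+1} \<times> Pow {1..n+1})"
    unfolding Gamma_def by force
  then show ?thesis by simp
qed

lemma test_mass_in_Gamma: "L \<le> n \<Longrightarrow> test_mass L \<in> Gamma n p"
  unfolding Gamma_def test_mass_def
  by (intro CollectI exI[of _ "n+1"] exI[of _ "{1..L}"]) auto

lemma one_in_Gamma: "1 \<in> Gamma n p"
  unfolding Gamma_def using p_row_sum[of 1]
  by (intro CollectI exI[of _ 1] exI[of _ "{1..n+1}"]) auto

lemma cov_frac_mono: "a \<le> a' \<Longrightarrow> cov_frac n V p a z \<le> cov_frac n V p a' z"
  unfolding cov_frac_def
  by (intro mult_left_mono add_mono sum_mono) (auto dest: quantile_mono order.trans)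

lemma row_sum_less_one:
  assumes i: "i \<in> {1..n+1}" and J: "J \<subseteq> {1..n+1}" "i \<notin> J"
  shows "(\<Sum>j\<in>J. p i j) < 1"
proof -
  have "(\<Sum>j\<in>J. p i j) + p i i = (\<Sum>j\<in>insert i J. p i j)"
    using J finite_subset[OF J(1)] by simp
  also have "\<dots> \<le> (\<Sum>j=1..n+1. p i j)"
    using i J by (intro sum_mono2) (auto simp: p_nonneg)
  finally show ?thesis using p_row_sum[OF i] p_diag_pos[OF i] by simp
qed

lemma cov_frac_one: "cov_frac n V p 1 (ereal v) = 1"
proof -
  have "theta n V p i + (if ereal v < ereal (V i) then p i (n+1) else 0) < 1" if i: "i \<in> {1..n}" for i
  proof -
    have "theta n V p i + p i (n+1) = (\<Sum>j\<in>insert (n+1) {1..ell n V i}. p i j)"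
      unfolding theta_def using ell_le[of i] by (simp add: add.commute)
    also have "\<dots> < 1"
      using i ell_less[of i] ell_le[of i] by (intro row_sum_less_one) auto
    finally show ?thesis using p_nonneg[of i "n+1"] by auto
  qed
  moreover have "test_mass (rank_below (ereal v)) < 1"
    unfolding test_mass_def using rank_below_le[of "ereal v"] by (intro row_sum_less_one) auto
  ultimately show ?thesis
    unfolding cov_frac_def le_quantile_Fi_test_iff by (simp add: le_quantile_Fi_iff)
qed

lemma conf_set_iff:
  assumes "\<alpha> \<le> 1"
  shows "v \<in> conf_set n V p \<alpha> \<longleftrightarrow>
    cov_frac n V p (test_mass (rank_below (ereal v))) (ereal v) < \<alpha>"
proof -
  let ?\<tau> = "test_mass (rank_below (ereal v))"
  define A where "A = {a \<in> Gamma n p. \<alpha> \<le> cov_frac n V p a (ereal v)}"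
  have "finite A" using finite_Gamma by (simp add: A_def)
  moreover have "1 \<in> A" using one_in_Gamma cov_frac_one assms by (simp add: A_def)
  ultimately have "?\<tau> < Min A \<longleftrightarrow> (\<forall>a\<in>A. ?\<tau> < a)"
    by (intro Min_gr_iff) auto
  then have "v \<in> conf_set n V p \<alpha> \<longleftrightarrow> (\<forall>a\<in>A. ?\<tau> < a)"
    by (simp add: conf_set_def alpha_tilde_def le_quantile_Fhat_iff A_def)
  also have "\<dots> \<longleftrightarrow> ?\<tau> \<notin> A"
  proof
    assume "?\<tau> \<notin> A"
    \<comment> \<open>since \<open>?\<tau> \<in> \<Gamma>\<close>, any smaller admissible level would make \<open>?\<tau>\<close> admissible\<close>
    show "\<forall>a\<in>A. ?\<tau> < a"
    proof (rule ballI, rule ccontr)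
      fix a assume "a \<in> A" "\<not> ?\<tau> < a"
      then have "\<alpha> \<le> cov_frac n V p a (ereal v)" and "a \<le> ?\<tau>" by (auto simp: A_def)
      then have "\<alpha> \<le> cov_frac n V p ?\<tau> (ereal v)" using cov_frac_mono order_trans by blast
      with \<open>?\<tau> \<notin> A\<close> show False
        using test_mass_in_Gamma[OF rank_below_le] by (simp add: A_def)
    qed
  qed auto
  also have "\<dots> \<longleftrightarrow> cov_frac n V p ?\<tau> (ereal v) < \<alpha>"
    using test_mass_in_Gamma[OF rank_below_le] by (auto simp: A_def)
  finally show ?thesis .
qed

lemma conf_set_subset_Vbar:
  assumes "\<alpha> \<le> 1" and k: "k \<in> {1..n+1}"
    and maximal: "\<forall>k'\<in>{1..n+1}. Sfun n V p k' < \<alpha> \<longrightarrow> k' \<le> k"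
  shows "conf_set n V p \<alpha> \<subseteq> {v. ereal v \<le> Vbar n V k}"
proof
  fix v assume "v \<in> conf_set n V p \<alpha>"
  then have cov: "cov_frac n V p (test_mass (rank_below (ereal v))) (ereal v) < \<alpha>"
    using conf_set_iff[OF assms(1)] by simp
  let ?L = "rank_below (ereal v)"
  have L: "?L + 1 \<in> {1..n+1}" using rank_below_le[of "ereal v"] by simp
  have "Sfun n V p (?L + 1) \<le> S_rank ?L"
    unfolding Sfun_eq_S_rank using ell_less[OF L] by (intro S_rank_mono) simp
  also have "\<dots> < \<alpha>" using S_rank_le_cov_frac cov by (rule le_less_trans)
  finally have "?L + 1 \<le> k" using maximal L by blast
  show "v \<in> {v. ereal v \<le> Vbar n V k}"
  proof (cases "k \<le> n")
    case True
    with k \<open>?L + 1 \<le> k\<close> have "k \<notin> {j\<in>{1..n}. ereal (V j) < ereal v}"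
      unfolding rank_below_set by auto
    with True k show ?thesis by (auto simp: Vbar_ereal)
  qed (simp add: Vbar_def)
qed

lemma below_Vbar_subset_conf_set:
  assumes "\<alpha> \<le> 1" and "Sfun n V p k < \<alpha>"
  shows "{v. ereal v < Vbar n V k} - V ` {1..n} \<subseteq> conf_set n V p \<alpha>"
proof
  fix v assume v: "v \<in> {v. ereal v < Vbar n V k} - V ` {1..n}"
  then have "rank_below (ereal v) \<le> ell n V k"
    by (auto simp: ell_eq_rank_below intro: rank_below_mono)
  then have "cov_frac n V p (test_mass (rank_below (ereal v))) (ereal v) \<le> Sfun n V p k"
    unfolding Sfun_eq_S_rank using v by (simp add: cov_frac_eq_S_rank S_rank_mono)
  with assms show "v \<in> conf_set n V p \<alpha>" by (simp add: conf_set_iff)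
qed

lemma closure_conf_set:
  assumes "\<alpha> \<le> 1" and k: "k \<in> {1..n+1}" "Sfun n V p k < \<alpha>"
    and maximal: "\<forall>k'\<in>{1..n+1}. Sfun n V p k' < \<alpha> \<longrightarrow> k' \<le> k"
  shows "closure (conf_set n V p \<alpha>) = {v. ereal v \<le> Vbar n V k}"
proof (rule antisym)
  show "closure (conf_set n V p \<alpha>) \<subseteq> {v. ereal v \<le> Vbar n V k}"
    using conf_set_subset_Vbar[OF assms(1,2) maximal] closed_ereal_le by (rule closure_minimal)
  have "Vbar n V k \<noteq> -\<infinity>" using k by (simp add: Vbar_def)
  then have "{v. ereal v \<le> Vbar n V k} = closure ({v. ereal v < Vbar n V k} - V ` {1..n})"
    by (simp add: closure_open_Diff_finite open_ereal_less closure_ereal_less)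
  also have "\<dots> \<subseteq> closure (conf_set n V p \<alpha>)"
    using below_Vbar_subset_conf_set[OF assms(1) k(2)] by (rule closure_mono)
  finally show "{v. ereal v \<le> Vbar n V k} \<subseteq> closure (conf_set n V p \<alpha>)" .
qed

lemma S_rank_summand_A1:
  assumes "i \<in> A1 n V p"
  shows "theta n V p i + (if L \<le> ell n V i then p i (n+1) else 0) < test_mass L
    \<longleftrightarrow> theta n V p i + p i (n+1) < test_mass L"
  using assms test_mass_mono[of "ell n V i" L] p_nonneg[of i "n+1"]
  by (cases "L \<le> ell n V i") (auto simp: A1_def theta_t_eq_test_mass)

lemma S_rank_summand_A2:
  assumes "i \<in> A2 n V p"
  shows "theta n V p i + (if L \<le> ell n V i then p i (n+1) else 0) < test_mass L
    \<longleftrightarrow> theta n V p i < test_mass L"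
  using assms test_mass_mono[of L "ell n V i"] p_nonneg[of i "n+1"]
  by (cases "L \<le> ell n V i") (auto simp: A2_def theta_t_eq_test_mass)

lemma S_rank_summand_A3:
  assumes "i \<in> A3 n V p"
  shows "theta n V p i + (if L \<le> ell n V i then p i (n+1) else 0) < test_mass L
    \<longleftrightarrow> ell n V i < L"
  using assms test_mass_mono[of L "ell n V i"] test_mass_mono[of "ell n V i" L]
  by (cases "L \<le> ell n V i") (auto simp: A3_def theta_t_eq_test_mass)

lemma A_partition: "{1..n} = A1 n V p \<union> A2 n V p \<union> A3 n V p"
  by (auto simp: A1_def A2_def A3_def)

lemma A_disjoint: "A1 n V p \<inter> A2 n V p = {}" "(A1 n V p \<union> A2 n V p) \<inter> A3 n V p = {}"
proof -
  have "\<not> (p i (n+1) + theta n V p i < theta_t n V p i \<and> theta_t n V p i \<le> theta n V p i)" for i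
    using p_nonneg[of i "n+1"] by linarith
  then show "A1 n V p \<inter> A2 n V p = {}" "(A1 n V p \<union> A2 n V p) \<inter> A3 n V p = {}"
    by (auto simp: A1_def A2_def A3_def)
qed

lemma finite_A: "finite (A1 n V p)" "finite (A2 n V p)" "finite (A3 n V p)"
  by (simp_all add: A1_def A2_def A3_def)

lemma Sfun_eq_class_sums:
  "Sfun n V p k = (1 / real (n+1)) *
     ((\<Sum>i\<in>A1 n V p. if theta n V p i + p i (n+1) < theta_t n V p k then 1 else 0)
    + (\<Sum>i\<in>A2 n V p. if theta n V p i < theta_t n V p k then 1 else 0)
    + (\<Sum>i\<in>A3 n V p. if ell n V i < ell n V k then 1 else 0))"
  (is "_ = ?rhs")
proof -
  let ?L = "ell n V k"
  let ?f = "\<lambda>i. if theta n V p i + (if ?L \<le> ell n V i then p i (n+1) else 0) < test_mass ?L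
                then 1 else (0::real)"
  have "Sfun n V p k =
      (1 / real (n+1)) * (sum ?f (A1 n V p) + sum ?f (A2 n V p) + sum ?f (A3 n V p))"
    unfolding Sfun_eq_S_rank S_rank_def A_partition
    by (simp add: sum.union_disjoint A_disjoint finite_A)
  also have "\<dots> = ?rhs"
    by (simp add: theta_t_eq_test_mass S_rank_summand_A1 S_rank_summand_A2 S_rank_summand_A3
        cong: sum.cong)
  finally show ?thesis .
qed

end

lemma localized_calibration_pH:
  assumes "mono_on {1..n} V" and H_nonneg: "\<And>x y. 0 \<le> H x y" and H_diag: "\<And>x. H x x = 1"
  shows "localized_calibration n V (pH n H X)"
proof
  show "mono_on {1..n} V" by fact
  show "0 \<le> pH n H X i j" for i j
    unfolding pH_def using H_nonneg by (intro divide_nonneg_nonneg sum_nonneg) auto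
  fix i :: nat
  assume i: "i \<in> {1..n+1}"
  have "H (X i) (X i) \<le> (\<Sum>k=1..n+1. H (X i) (X k))"
    using i H_nonneg by (intro member_le_sum) auto
  then have denom: "1 \<le> (\<Sum>k=1..n+1. H (X i) (X k))" using H_diag by simp
  then show "0 < pH n H X i i" by (simp add: pH_def H_diag)
  show "(\<Sum>j=1..n+1. pH n H X i j) = 1"
    using denom by (simp add: pH_def sum_divide_distrib[symmetric])
qed

theorem lemma2:
  fixes n :: nat and V :: "nat \<Rightarrow> real" and X :: "nat \<Rightarrow> real^'p"
    and H :: "real^'p \<Rightarrow> real^'p \<Rightarrow> real" and \<alpha> :: real
  assumes sorted: "mono_on {1..n} V"
    and H_range: "\<forall>x y. 0 \<le> H x y \<and> H x y \<le> 1"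
    and H_diag: "\<forall>x. H x x = 1"
    and alpha: "0 < \<alpha>" "\<alpha> < 1"
  shows "(\<forall>kstar. kstar \<in> {1..n+1} \<and> Sfun n V (pH n H X) kstar < \<alpha>
            \<and> (\<forall>k\<in>{1..n+1}. Sfun n V (pH n H X) k < \<alpha> \<longrightarrow> k \<le> kstar)
          \<longrightarrow> closure (conf_set n V (pH n H X) \<alpha>) = {v. ereal v \<le> Vbar n V kstar})
       \<and> (\<forall>k\<in>{1..n+1}. Sfun n V (pH n H X) k = (1 / real (n+1)) *
           ((\<Sum>i\<in>A1 n V (pH n H X).
               if theta n V (pH n H X) i + pH n H X i (n+1) < theta_t n V (pH n H X) k then 1 else 0)
          + (\<Sum>i\<in>A2 n V (pH n H X).
               if theta n V (pH n H X) i < theta_t n V (pH n H X) k then 1 else 0)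
          + (\<Sum>i\<in>A3 n V (pH n H X).
               if ell n V i < ell n V k then 1 else 0)))"
proof -
  interpret localized_calibration n V "pH n H X"
    using sorted H_range H_diag by (intro localized_calibration_pH) auto
  show ?thesis
    using closure_conf_set[OF less_imp_le[OF alpha(2)]] Sfun_eq_class_sums by blast
qed

end
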